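(* Let $a_c\in(\pi,\frac32\pi)$ denote the smallest strictly positive solution of $\tanh(x)=\tan(x)$ and let $\alpha_{\mathrm{crit}}:=\frac{1}{a_c\sqrt2}$. Then for every $\alpha\ge\alpha_{\mathrm{crit}}$ the rate of change function satisfies $\mathit{rc}_\alpha'(x)>0$ for all $x\in(0,1)$.
   Context: For $\alpha>0$ let $\varepsilon_\alpha=\frac{1}{4\alpha^2}$. The constant $u\equiv\alpha$ solves the Helfrich Dirichlet problem $\frac{1}{u\sqrt{1+u'^2}}\frac{d}{dx}\bigl(\frac{u}{\sqrt{1+u'^2}}H'\bigr)+\frac12 H\bigl(\frac{u''}{(1+u'^2)^{3/2}}+\frac{1}{u\sqrt{1+u'^2}}\bigr)^2-2\varepsilon H=0$ in $(-1,1)$, $u(\pm1)=\alpha$, $u'(\pm1)=0$ (with $H=\frac12(\frac{1}{u\sqrt{1+u'^2}}-\frac{u''}{(1+u'^2)^{3/2}})$) for $\varepsilon=\varepsilon_\alpha$, and there is a smooth family $(u_\varepsilon)$ of solutions for $\varepsilon$ near $\varepsilon_\alpha$ with $u_{\varepsilon_\alpha}\equiv\alpha$. The rate of change function is $\mathit{rc}_\alpha:=\frac{\partial u_\varepsilon}{\partial\varepsilon}\big|_{\varepsilon=\varepsilon_\alpha}$; equivalently, $\mathit{rc}_\alpha$ is the unique solution of $\mathit{rc}_\alpha^{(iv)}+\frac{1}{\alpha^4}\mathit{rc}_\alpha=-\frac{2}{\alpha}$ in $(-1,1)$, $\mathit{rc}_\alpha(\pm1)=\mathit{rc}_\alpha'(\pm1)=0$.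 *)

theory Defs
  imports "HOL-Analysis.Analysis"
begin

definition a_c :: real where
  "a_c = (THE x. 0 < x \<and> tanh x = tan x \<and> (\<forall>y. 0 < y \<and> y < x \<longrightarrow> tanh y \<noteq> tan y))"

definition alpha_crit :: real where
  "alpha_crit = 1 / (a_c * sqrt 2)"

text \<open>f solves the boundary value problem characterising the rate of change
  function rc_alpha:  f'''' + f / alpha^4 = -2/alpha on (-1,1),
  f(-1) = f(1) = 0, f'(-1) = f'(1) = 0 (one-sided derivatives on [-1,1]),
  with f four times differentiable on (-1,1).\<close>
definition is_rc :: "real \<Rightarrow> (real \<Rightarrow> real) \<Rightarrow> bool" where
  "is_rc \<alpha> f \<longleftrightarrow>
     (\<forall>k<4. \<forall>x\<in>{-1<..<1}. ((deriv ^^ k) f has_real_derivative (deriv ^^ Suc k) f x) (at x)) \<and>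
     (\<forall>x\<in>{-1<..<1}. (deriv ^^ 4) f x + f x / \<alpha> ^ 4 = - 2 / \<alpha>) \<and>
     f (-1) = 0 \<and> f 1 = 0 \<and>
     (f has_real_derivative 0) (at (-1) within {-1..1}) \<and>
     (f has_real_derivative 0) (at 1 within {-1..1})"

end

theory Submission
  imports Defs
begin

text \<open>With \<open>k = 1/(\<alpha> sqrt 2)\<close> the equation reads \<open>rc'''' + 4 k^4 rc = -2/\<alpha>\<close>, whose
  homogeneous solutions are spanned by \<open>cosh(kx) cos(kx)\<close>, \<open>sinh(kx) sin(kx)\<close>,
  \<open>u(kx) = sinh(kx) cos(kx)\<close> and \<open>v(kx) = cosh(kx) sin(kx)\<close>; an energy estimate shows
  that \<open>rc + 2\<alpha>^3\<close> is such a combination. The clamped boundary conditions remove the odd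
  part and leave \<open>rc'(x)\<close> a positive multiple of \<open>v(k) u(kx) - u(k) v(kx)\<close>.
  The plane curve \<open>t \<mapsto> (u t, v t)\<close> turns counterclockwise (its Wronskian is
  \<open>sinh t cosh t - sin t cos t > 0\<close>); it leaves the origin in direction \<open>\<pi>/4\<close> and next
  meets the diagonal \<open>u = v\<close>, i.e. \<open>tan t = tanh t\<close>, at \<open>t = a_c\<close>, in direction \<open>5\<pi>/4\<close>.
  So for \<open>0 < kx < k \<le> a_c\<close> the two vectors enclose an angle in \<open>(0, \<pi>)\<close>, which is the
  positivity of the cross product; and \<open>k \<le> a_c\<close> is exactly \<open>\<alpha> \<ge> \<alpha>_crit\<close>.\<close>

text \<open>Where \<open>cos x \<noteq> 0\<close> this is \<open>cosh x cos x (tan x - tanh x)\<close>.\<close>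
definition tan_tanh_gap :: "real \<Rightarrow> real" where
  "tan_tanh_gap x = cosh x * sin x - sinh x * cos x"

lemma has_real_derivative_tan_tanh_gap:
  "(tan_tanh_gap has_real_derivative 2 * sinh x * sin x) (at x)"
  unfolding tan_tanh_gap_def [abs_def]
  by (rule derivative_eq_intros refl)+ (simp add: algebra_simps)

lemma tan_tanh_gap_pos:
  assumes "0 < x" "x \<le> pi"
  shows "tan_tanh_gap x > 0"
proof -
  have "tan_tanh_gap 0 < tan_tanh_gap x"
  proof (rule DERIV_pos_imp_increasing_open[OF \<open>0 < x\<close>])
    fix y :: real assume "0 < y" "y < x"
    then have "2 * sinh y * sin y > 0"
      using assms by (intro mult_pos_pos sin_gt_zero) auto
    then show "\<exists>d. (tan_tanh_gap has_real_derivative d) (at y) \<and> 0 < d"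
      using has_real_derivative_tan_tanh_gap by blast
  qed (auto simp: tan_tanh_gap_def intro!: continuous_intros)
  then show ?thesis by (simp add: tan_tanh_gap_def)
qed

lemma tan_tanh_gap_strict_antimono:
  assumes "pi \<le> x" "x < y" "y \<le> 2 * pi"
  shows "tan_tanh_gap y < tan_tanh_gap x"
proof (rule DERIV_neg_imp_decreasing_open[OF \<open>x < y\<close>])
  fix z :: real assume "x < z" "z < y"
  then have "2 * sinh z * sin z < 0"
    using assms by (intro mult_pos_neg sin_lt_zero) auto
  then show "\<exists>d. (tan_tanh_gap has_real_derivative d) (at z) \<and> d < 0"
    using has_real_derivative_tan_tanh_gap by blast
qed (auto simp: tan_tanh_gap_def intro!: continuous_intros)

text \<open>Where \<open>cos x = 0\<close> we have \<open>tan x = 0 < tanh x\<close> (division by zero yields zero),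
  while \<open>tan_tanh_gap x = cosh x * sin x \<noteq> 0\<close>.\<close>
lemma tanh_eq_tan_iff_gap_zero:
  assumes "0 < x"
  shows "tanh x = tan x \<longleftrightarrow> tan_tanh_gap x = 0"
proof (cases "cos x = 0")
  case True
  then have "sin x \<noteq> 0" using sin_cos_squared_add[of x] by auto
  with True assms show ?thesis by (simp add: tan_def tan_tanh_gap_def)
next
  case False
  have "cosh x > 0" by simp
  with False show ?thesis by (auto simp: tanh_def tan_def tan_tanh_gap_def field_simps)
qed

lemma tan_tanh_gap_root_exists: "\<exists>m. pi < m \<and> m < 3*pi/2 \<and> tan_tanh_gap m = 0"
proof -
  have "tan_tanh_gap (3*pi/2) < 0"
    using cos_3over2_pi sin_3over2_pi by (simp add: tan_tanh_gap_def mult.commute)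
  moreover have "tan_tanh_gap pi > 0"
    by (simp add: tan_tanh_gap_def)
  ultimately obtain m where "pi \<le> m" "m \<le> 3*pi/2" "tan_tanh_gap m = 0"
    using IVT2[of tan_tanh_gap "3*pi/2" 0 pi] DERIV_isCont[OF has_real_derivative_tan_tanh_gap]
    by force
  moreover from this \<open>tan_tanh_gap pi > 0\<close> \<open>tan_tanh_gap (3*pi/2) < 0\<close>
  have "m \<noteq> pi" "m \<noteq> 3*pi/2" by (metis less_irrefl)+
  ultimately show ?thesis by force
qed

lemma tan_tanh_gap_pos_below_root:
  assumes "pi < m" "m \<le> 2*pi" "tan_tanh_gap m = 0" "0 < x" "x < m"
  shows "tan_tanh_gap x > 0"
proof (cases "x \<le> pi")
  case True
  then show ?thesis using assms tan_tanh_gap_pos by blast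
next
  case False
  then show ?thesis using assms tan_tanh_gap_strict_antimono[of x m] by simp
qed

lemma a_c_eq_root:
  assumes "pi < m" "m \<le> 2*pi" "tan_tanh_gap m = 0"
  shows "a_c = m"
  unfolding a_c_def
proof (rule the_equality)
  have "0 < m" using assms(1) pi_gt_zero by linarith
  with assms tan_tanh_gap_pos_below_root
  show "0 < m \<and> tanh m = tan m \<and> (\<forall>y. 0 < y \<and> y < m \<longrightarrow> tanh y \<noteq> tan y)"
    by (force simp: tanh_eq_tan_iff_gap_zero)
  fix x :: real assume x: "0 < x \<and> tanh x = tan x \<and> (\<forall>y. 0 < y \<and> y < x \<longrightarrow> tanh y \<noteq> tan y)"
  then have "\<not> x < m" using tan_tanh_gap_pos_below_root[OF assms] tanh_eq_tan_iff_gap_zero by force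
  moreover have "\<not> m < x" using x \<open>0 < m\<close> assms(3) tanh_eq_tan_iff_gap_zero by blast
  ultimately show "x = m" by simp
qed

lemma a_c_bounds: "pi < a_c" "a_c < 3*pi/2"
  using tan_tanh_gap_root_exists a_c_eq_root by (force, force)

lemma tan_tanh_gap_nonneg_below_a_c:
  assumes "0 < x" "x \<le> a_c"
  shows "tan_tanh_gap x \<ge> 0"
proof -
  obtain m where m: "pi < m" "m < 3*pi/2" "tan_tanh_gap m = 0"
    using tan_tanh_gap_root_exists by blast
  then have "a_c = m" by (intro a_c_eq_root) auto
  then show ?thesis
    using assms m tan_tanh_gap_pos_below_root[of m x] by (cases "x = m") auto
qed

lemma sinh_gt_self:
  fixes x :: real assumes "0 < x" shows "x < sinh x"
proof -
  have "(\<lambda>y. sinh y - y) 0 < (\<lambda>y. sinh y - y) x"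
  proof (rule DERIV_pos_imp_increasing_open[OF assms])
    fix y :: real assume "0 < y" "y < x"
    then have "cosh y - 1 > 0" using cosh_real_ge_1[of y] cosh_real_one_iff[of y] by linarith
    moreover have "((\<lambda>y. sinh y - y) has_real_derivative cosh y - 1) (at y)"
      by (rule derivative_eq_intros refl)+ simp
    ultimately show "\<exists>d. ((\<lambda>y. sinh y - y) has_real_derivative d) (at y) \<and> 0 < d" by blast
  qed (intro continuous_intros)
  then show ?thesis by simp
qed

lemma abs_sin_cos_less_sinh_cosh:
  fixes t :: real assumes "0 < t" shows "\<bar>sin t * cos t\<bar> < sinh t * cosh t"
proof -
  have "\<bar>sin (2 * t)\<bar> < sinh (2 * t)"
    using abs_sin_x_le_abs_x[of "2 * t"] sinh_gt_self[of "2 * t"] assms by simp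
  then show ?thesis by (simp add: sin_double sinh_double abs_mult)
qed

lemma cosh_sin_over_sinh_cos_strict_mono:
  fixes t K :: real
  assumes "0 < t" "t < K" "\<forall>x\<in>{t..K}. cos x \<noteq> 0"
  shows "cosh t * sin t / (sinh t * cos t) < cosh K * sin K / (sinh K * cos K)"
proof (rule DERIV_pos_imp_increasing_open[OF \<open>t < K\<close>,
    where f = "\<lambda>x. cosh x * sin x / (sinh x * cos x)"])
  fix x :: real assume x: "t < x" "x < K"
  then have "cos x \<noteq> 0" "sinh x > 0" using assms by auto
  then have "((\<lambda>x. cosh x * sin x / (sinh x * cos x)) has_real_derivative
      (sinh x * cosh x - sin x * cos x) / (sinh x * cos x)^2) (at x)"
    apply (intro derivative_eq_intros refl)
    using hyperbolic_pythagoras[of x] sin_cos_squared_add[of x]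
    by (auto simp: divide_simps power2_eq_square) algebra
  moreover have "(sinh x * cosh x - sin x * cos x) / (sinh x * cos x)^2 > 0"
    using abs_sin_cos_less_sinh_cosh[of x] x assms \<open>cos x \<noteq> 0\<close> by (intro divide_pos_pos) auto
  ultimately show "\<exists>d. ((\<lambda>x. cosh x * sin x / (sinh x * cos x)) has_real_derivative d) (at x) \<and> 0 < d"
    by blast
next
  show "continuous_on {t..K} (\<lambda>x. cosh x * sin x / (sinh x * cos x))"
    using assms by (intro continuous_intros) auto
qed

lemma sinh_cos_cosh_sin_cross_pos_of_cos_sign:
  fixes t K :: real
  assumes "0 < t" "t < K" and cos_sign: "(\<forall>x\<in>{t..K}. cos x > 0) \<or> (\<forall>x\<in>{t..K}. cos x < 0)"
  shows "sinh t * cos t * (cosh K * sin K) - sinh K * cos K * (cosh t * sin t) > 0"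
proof -
  have "t \<in> {t..K}" "K \<in> {t..K}" using assms(2) by auto
  with cos_sign have "cos t * cos K > 0" by (auto intro: mult_neg_neg)
  moreover have "sinh t * sinh K > 0" using assms(1,2) by simp
  ultimately have "(sinh t * sinh K) * (cos t * cos K) > 0" by simp
  then have "(sinh t * cos t) * (sinh K * cos K) > 0" "sinh t * cos t \<noteq> 0" "sinh K * cos K \<noteq> 0"
    by (auto simp: ac_simps)
  moreover have "cosh t * sin t / (sinh t * cos t) < cosh K * sin K / (sinh K * cos K)"
    using assms by (intro cosh_sin_over_sinh_cos_strict_mono) auto
  ultimately have "cosh t * sin t / (sinh t * cos t) * ((sinh t * cos t) * (sinh K * cos K))
      < cosh K * sin K / (sinh K * cos K) * ((sinh t * cos t) * (sinh K * cos K))"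
    by (intro mult_strict_right_mono)
  with \<open>sinh t * cos t \<noteq> 0\<close> \<open>sinh K * cos K \<noteq> 0\<close> show ?thesis
    by (simp add: field_simps)
qed

lemma sinh_cos_cosh_sin_cross_pos:
  assumes "0 < t" "t < K" "K \<le> a_c"
  shows "sinh t * cos t * (cosh K * sin K) - sinh K * cos K * (cosh t * sin t) > 0"
proof -
  have "K < 3*pi/2" using assms a_c_bounds by linarith
  consider "K < pi/2" | "pi/2 < t" | "t \<le> pi/2" "pi/2 \<le> K" by linarith
  then show ?thesis
  proof cases
    case 1
    then show ?thesis using assms
      by (intro sinh_cos_cosh_sin_cross_pos_of_cos_sign) (auto intro!: cos_gt_zero_pi)
  next
    case 2
    then show ?thesis using assms \<open>K < 3*pi/2\<close>
      by (intro sinh_cos_cosh_sin_cross_pos_of_cos_sign) (auto intro!: cos_lt_zero_pi)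
  next
    case 3
    txt \<open>Write the cross product as \<open>(v K - u K) u t + u K (u t - v t)\<close> with
      \<open>u = sinh * cos\<close>, \<open>v = cosh * sin\<close>; both terms are nonnegative.\<close>
    have "sinh t > 0" "sinh K > 0" using assms by auto
    have "cos t \<ge> 0" using 3 assms by (intro cos_ge_zero) auto
    have "sinh t * cos t - cosh t * sin t < 0"
      using tan_tanh_gap_pos[of t] assms 3 by (simp add: tan_tanh_gap_def)
    moreover have "cosh K * sin K - sinh K * cos K \<ge> 0"
      using tan_tanh_gap_nonneg_below_a_c[of K] assms by (simp add: tan_tanh_gap_def)
    moreover have "sinh t * cos t \<ge> 0" using \<open>sinh t > 0\<close> \<open>cos t \<ge> 0\<close> by simp
    ultimately have terms: "(cosh K * sin K - sinh K * cos K) * (sinh t * cos t) \<ge> 0"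
      "sinh K * cos K < 0 \<Longrightarrow> sinh K * cos K * (sinh t * cos t - cosh t * sin t) > 0"
      by (auto intro: mult_neg_neg)
    show ?thesis
    proof (cases "K = pi/2")
      case True
      then have "cos t > 0" using assms by (intro cos_gt_zero_pi) auto
      moreover have "cos K = 0" "sin K = 1" unfolding True by simp_all
      ultimately show ?thesis using \<open>sinh t > 0\<close> by simp
    next
      case False
      then have "cos K < 0" using 3 \<open>K < 3*pi/2\<close> by (intro cos_lt_zero_pi) auto
      then have "sinh K * cos K < 0" using \<open>sinh K > 0\<close> by (simp add: mult_pos_neg)
      with terms show ?thesis by (simp add: algebra_simps)
    qed
  qed
qed

lemma energy_derivative_bound:
  fixes p q r w c :: real
  shows "\<bar>2*p*q + 2*q*r + 2*r*w + 2*c*w*p\<bar> \<le> (2 + \<bar>c\<bar>) * (p^2 + q^2 + r^2 + w^2)"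
proof -
  have sq: "\<bar>2*x*y\<bar> \<le> x^2 + y^2" for x y :: real
    using zero_le_power2[of "x - y"] zero_le_power2[of "x + y"]
    by (simp add: abs_le_iff power2_eq_square algebra_simps)
  have "\<bar>2*c*w*p\<bar> \<le> \<bar>c\<bar> * (w^2 + p^2)"
    using mult_left_mono[OF sq[of w p], of "\<bar>c\<bar>"] by (simp add: abs_mult)
  moreover have "(2 + \<bar>c\<bar>) * (p^2 + q^2 + r^2 + w^2)
      = 2*p^2 + 2*q^2 + 2*r^2 + 2*w^2 + \<bar>c\<bar> * (w^2 + p^2) + \<bar>c\<bar> * q^2 + \<bar>c\<bar> * r^2"
    by (simp add: algebra_simps)
  moreover have "\<bar>c\<bar> * q^2 \<ge> 0" "\<bar>c\<bar> * r^2 \<ge> 0" "p^2 \<ge> 0" "w^2 \<ge> 0" by simp_all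
  ultimately show ?thesis
    using sq[of p q] sq[of q r] sq[of r w] unfolding abs_le_iff by linarith
qed

lemma vanishing_of_derivative_bounded_by_self:
  fixes E E' :: "real \<Rightarrow> real"
  assumes deriv: "\<And>y. y \<in> {a<..<b} \<Longrightarrow> (E has_real_derivative E' y) (at y)"
    and bound: "\<And>y. y \<in> {a<..<b} \<Longrightarrow> \<bar>E' y\<bar> \<le> L * E y"
    and nonneg: "\<And>y. y \<in> {a<..<b} \<Longrightarrow> E y \<ge> 0"
    and x0: "x0 \<in> {a<..<b}" "E x0 = 0"
    and x: "x \<in> {a<..<b}"
  shows "E x = 0"
proof -
  have "E x * exp (- L * \<bar>x - x0\<bar>) \<le> 0"
  proof (cases "x0 \<le> x")
    case True
    define P where "P y = E y * exp (- L * (y - x0))" for y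
    have "P x \<le> P x0"
    proof (rule DERIV_nonpos_imp_nonincreasing[OF True])
      fix y assume "x0 \<le> y" "y \<le> x"
      then have y: "y \<in> {a<..<b}" using x0 x by auto
      have "(P has_real_derivative (E' y - L * E y) * exp (- L * (y - x0))) (at y)"
        unfolding P_def [abs_def]
        by (rule derivative_eq_intros deriv[OF y] refl)+ (simp add: algebra_simps)
      moreover have "(E' y - L * E y) * exp (- L * (y - x0)) \<le> 0"
        using bound[OF y] by (intro mult_nonpos_nonneg) auto
      ultimately show "\<exists>d. (P has_real_derivative d) (at y) \<and> d \<le> 0" by blast
    qed
    with True x0 show ?thesis by (simp add: P_def)
  next
    case False
    define P where "P y = E y * exp (L * (y - x0))" for y
    have "P x \<le> P x0"
    proof (rule DERIV_nonneg_imp_nondecreasing[of x x0 P])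
      show "x \<le> x0" using False by simp
      fix y assume "x \<le> y" "y \<le> x0"
      then have y: "y \<in> {a<..<b}" using x0 x by auto
      have "(P has_real_derivative (E' y + L * E y) * exp (L * (y - x0))) (at y)"
        unfolding P_def [abs_def]
        by (rule derivative_eq_intros deriv[OF y] refl)+ (simp add: algebra_simps)
      moreover have "(E' y + L * E y) * exp (L * (y - x0)) \<ge> 0"
        using bound[OF y] by (intro mult_nonneg_nonneg) auto
      ultimately show "\<exists>d. (P has_real_derivative d) (at y) \<and> d \<ge> 0" by blast
    qed
    with False x0 show ?thesis by (simp add: P_def algebra_simps)
  qed
  then show ?thesis using nonneg[OF x] by (simp add: mult_le_0_iff)
qed

lemma linear_ode4_vanishing:
  fixes h0 h1 h2 h3 :: "real \<Rightarrow> real" and c :: real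
  assumes "\<And>x. x \<in> {a<..<b} \<Longrightarrow> (h0 has_real_derivative h1 x) (at x)"
    and "\<And>x. x \<in> {a<..<b} \<Longrightarrow> (h1 has_real_derivative h2 x) (at x)"
    and "\<And>x. x \<in> {a<..<b} \<Longrightarrow> (h2 has_real_derivative h3 x) (at x)"
    and "\<And>x. x \<in> {a<..<b} \<Longrightarrow> (h3 has_real_derivative c * h0 x) (at x)"
    and x0: "x0 \<in> {a<..<b}" "h0 x0 = 0" "h1 x0 = 0" "h2 x0 = 0" "h3 x0 = 0"
    and x: "x \<in> {a<..<b}"
  shows "h0 x = 0 \<and> h1 x = 0 \<and> h2 x = 0 \<and> h3 x = 0"
proof -
  define E where "E y = (h0 y)^2 + (h1 y)^2 + (h2 y)^2 + (h3 y)^2" for y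
  have "E x = 0"
  proof (rule vanishing_of_derivative_bounded_by_self[OF _ _ _ x0(1) _ x])
    fix y assume "y \<in> {a<..<b}"
    then show "(E has_real_derivative
        2*h0 y*h1 y + 2*h1 y*h2 y + 2*h2 y*h3 y + 2*c*h3 y*h0 y) (at y)"
      unfolding E_def [abs_def] using assms(1-4)
      by (auto intro!: derivative_eq_intros simp: algebra_simps)
    show "\<bar>2*h0 y*h1 y + 2*h1 y*h2 y + 2*h2 y*h3 y + 2*c*h3 y*h0 y\<bar> \<le> (2 + \<bar>c\<bar>) * E y"
      unfolding E_def by (rule energy_derivative_bound)
  qed (use x0 in \<open>auto simp: E_def\<close>)
  then show ?thesis by (simp add: E_def add_nonneg_eq_0_iff)
qed

fun hc_comb :: "real \<Rightarrow> real \<times> real \<times> real \<times> real \<Rightarrow> real \<Rightarrow> real" where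
  "hc_comb k (a, b, c, d) x =
     a * (cosh (k*x) * cos (k*x)) + b * (sinh (k*x) * sin (k*x))
     + c * (sinh (k*x) * cos (k*x)) + d * (cosh (k*x) * sin (k*x))"

fun hc_coeff_deriv :: "real \<Rightarrow> real \<times> real \<times> real \<times> real \<Rightarrow> real \<times> real \<times> real \<times> real" where
  "hc_coeff_deriv k (a, b, c, d) = (k * (c + d), k * (d - c), k * (a + b), k * (b - a))"

lemma has_real_derivative_hc_comb:
  "(hc_comb k a has_real_derivative hc_comb k (hc_coeff_deriv k a) x) (at x)"
proof -
  obtain a1 a2 a3 a4 where a: "a = (a1, a2, a3, a4)" by (cases a)
  show ?thesis unfolding a hc_comb.simps hc_coeff_deriv.simps
    by (rule derivative_eq_intros refl)+ (simp add: algebra_simps)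
qed

lemma hc_comb_coeff_deriv4:
  "hc_comb k ((hc_coeff_deriv k ^^ 4) a) x = - 4 * k^4 * hc_comb k a x"
  by (cases a) (simp add: eval_nat_numeral algebra_simps)

lemma hc_comb_initial_values:
  assumes "k \<noteq> 0"
  shows "\<exists>c. hc_comb k c 0 = y0 \<and> hc_comb k (hc_coeff_deriv k c) 0 = y1
    \<and> hc_comb k ((hc_coeff_deriv k ^^ 2) c) 0 = y2 \<and> hc_comb k ((hc_coeff_deriv k ^^ 3) c) 0 = y3"
  using assms
  by (intro exI[of _ "(y0, y2 / (2 * k^2), (y1 / k - y3 / (2 * k^3)) / 2, (y1 / k + y3 / (2 * k^3)) / 2)"])
    (simp add: eval_nat_numeral field_simps)

lemma hc_comb_of_linear_ode4:
  fixes g0 g1 g2 g3 :: "real \<Rightarrow> real"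
  assumes "k \<noteq> 0" "0 \<in> {a<..<b}"
    and "\<And>x. x \<in> {a<..<b} \<Longrightarrow> (g0 has_real_derivative g1 x) (at x)"
    and "\<And>x. x \<in> {a<..<b} \<Longrightarrow> (g1 has_real_derivative g2 x) (at x)"
    and "\<And>x. x \<in> {a<..<b} \<Longrightarrow> (g2 has_real_derivative g3 x) (at x)"
    and "\<And>x. x \<in> {a<..<b} \<Longrightarrow> (g3 has_real_derivative - 4 * k^4 * g0 x) (at x)"
  obtains c where "\<And>x. x \<in> {a<..<b} \<Longrightarrow> g0 x = hc_comb k c x"
    and "\<And>x. x \<in> {a<..<b} \<Longrightarrow> g1 x = hc_comb k (hc_coeff_deriv k c) x"
proof -
  let ?D = "hc_coeff_deriv k"
  obtain c where "hc_comb k c 0 = g0 0" "hc_comb k (?D c) 0 = g1 0"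
    "hc_comb k ((?D ^^ 2) c) 0 = g2 0" "hc_comb k ((?D ^^ 3) c) 0 = g3 0"
    using hc_comb_initial_values[OF \<open>k \<noteq> 0\<close>] by blast
  then have init: "hc_comb k c 0 = g0 0" "hc_comb k (?D c) 0 = g1 0"
    "hc_comb k (?D (?D c)) 0 = g2 0" "hc_comb k (?D (?D (?D c))) 0 = g3 0"
    by (simp_all add: numeral_eq_Suc)
  define h0 where "h0 x = g0 x - hc_comb k c x" for x
  define h1 where "h1 x = g1 x - hc_comb k (?D c) x" for x
  define h2 where "h2 x = g2 x - hc_comb k (?D (?D c)) x" for x
  define h3 where "h3 x = g3 x - hc_comb k (?D (?D (?D c))) x" for x
  have "hc_comb k (?D (?D (?D (?D c)))) x = - 4 * k^4 * hc_comb k c x" for x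
    using hc_comb_coeff_deriv4[of k c x] by (simp add: numeral_eq_Suc)
  then have "(h3 has_real_derivative - 4 * k^4 * h0 x) (at x)" if "x \<in> {a<..<b}" for x
    using DERIV_diff[OF assms(6)[OF that] has_real_derivative_hc_comb[of k "?D (?D (?D c))" x]]
    by (simp add: h3_def [abs_def] h0_def algebra_simps)
  then have "h0 x = 0 \<and> h1 x = 0 \<and> h2 x = 0 \<and> h3 x = 0" if "x \<in> {a<..<b}" for x
    using linear_ode4_vanishing[of a b h0 h1 h2 h3 "- 4 * k^4" 0 x] that assms(2)
      DERIV_diff[OF assms(3) has_real_derivative_hc_comb] DERIV_diff[OF assms(4) has_real_derivative_hc_comb]
      DERIV_diff[OF assms(5) has_real_derivative_hc_comb]
    by (simp add: h0_def [abs_def] h1_def [abs_def] h2_def [abs_def] h3_def [abs_def] init)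
  then show ?thesis
    by (intro that) (auto simp: h0_def h1_def)
qed

lemma is_rc_eq_hc_comb:
  fixes \<alpha> :: real and f :: "real \<Rightarrow> real"
  assumes "\<alpha> > 0" "is_rc \<alpha> f"
  defines "k \<equiv> 1 / (\<alpha> * sqrt 2)"
  obtains c where "\<And>x. x \<in> {-1<..<1} \<Longrightarrow> f x = hc_comb k c x - 2 * \<alpha>^3"
    and "\<And>x. x \<in> {-1<..<1} \<Longrightarrow> deriv f x = hc_comb k (hc_coeff_deriv k c) x"
proof -
  have "(sqrt 2)^4 = (4::real)"
    using power_mult[of "sqrt 2" 2 2] by simp
  then have k4: "k^4 = 1 / (4 * \<alpha>^4)"
    using \<open>\<alpha> > 0\<close> by (simp add: k_def power_mult_distrib power_divide)
  note rc = assms(2)[unfolded is_rc_def]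
  have derivs: "((deriv ^^ n) f has_real_derivative (deriv ^^ Suc n) f x) (at x)"
    if "n < 4" "x \<in> {-1<..<1}" for n x
    using rc that by blast
  have d3: "((deriv ^^ 3) f has_real_derivative - 4 * k^4 * (f x + 2 * \<alpha>^3)) (at x)"
    if "x \<in> {-1<..<1}" for x
  proof -
    have "(deriv ^^ 4) f x + f x / \<alpha>^4 = - 2 / \<alpha>"
      using rc that by blast
    then have ode: "(deriv ^^ 4) f x = - 2 / \<alpha> - f x / \<alpha>^4"
      by linarith
    have "- 4 * k^4 * (f x + 2 * \<alpha>^3) = - 2 / \<alpha> - f x / \<alpha>^4"
      unfolding k4 using \<open>\<alpha> > 0\<close> by (simp add: field_simps power_numeral_reduce)
    with ode have "(deriv ^^ 4) f x = - 4 * k^4 * (f x + 2 * \<alpha>^3)"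
      by simp
    then show ?thesis
      using derivs[of 3 x] that by (simp add: numeral_eq_Suc)
  qed
  have d012: "((\<lambda>x. f x + 2 * \<alpha>^3) has_real_derivative deriv f x) (at x)"
    "(deriv f has_real_derivative (deriv ^^ 2) f x) (at x)"
    "((deriv ^^ 2) f has_real_derivative (deriv ^^ 3) f x) (at x)"
    if "x \<in> {-1<..<1}" for x
    using derivs[OF _ that, of 0] derivs[OF _ that, of 1] derivs[OF _ that, of 2]
    by (auto simp: numeral_eq_Suc intro!: derivative_eq_intros)
  have "k \<noteq> 0" using \<open>\<alpha> > 0\<close> by (simp add: k_def)
  obtain c where "\<And>x. x \<in> {-1<..<1} \<Longrightarrow> f x + 2 * \<alpha>^3 = hc_comb k c x"
    "\<And>x. x \<in> {-1<..<1} \<Longrightarrow> deriv f x = hc_comb k (hc_coeff_deriv k c) x"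
    by (rule hc_comb_of_linear_ode4[OF \<open>k \<noteq> 0\<close> _ d012 d3]) auto
  then show ?thesis
    by (intro that) (auto simp: algebra_simps)
qed

lemma hc_coeffs_of_boundary_values:
  assumes "k > 0"
    and "hc_comb k (a, b, c, d) 1 = \<beta>" "hc_comb k (a, b, c, d) (-1) = \<beta>"
    and "hc_comb k (hc_coeff_deriv k (a, b, c, d)) 1 = 0"
    and "hc_comb k (hc_coeff_deriv k (a, b, c, d)) (-1) = 0"
  shows "c = 0" "d = 0"
    "a * (sinh k * cosh k + sin k * cos k) = \<beta> * (sinh k * cos k + cosh k * sin k)"
    "b * (sinh k * cosh k + sin k * cos k) = \<beta> * (cosh k * sin k - sinh k * cos k)"
proof -
  define e1 where "e1 = cosh k * cos k"
  define e2 where "e2 = sinh k * sin k"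
  define u where "u = sinh k * cos k"
  define v where "v = cosh k * sin k"
  have "(a * e1 + b * e2) + (c * u + d * v) = \<beta>" "(a * e1 + b * e2) - (c * u + d * v) = \<beta>"
    using assms(2,3) by (simp_all add: e1_def e2_def u_def v_def algebra_simps)
  then have even: "a * e1 + b * e2 = \<beta>" and odd: "c * u + d * v = 0"
    by linarith+
  have "k * ((c + d) * e1 + (d - c) * e2) + k * ((a + b) * u + (b - a) * v) = 0"
    "k * ((c + d) * e1 + (d - c) * e2) - k * ((a + b) * u + (b - a) * v) = 0"
    using assms(4,5) by (simp_all add: e1_def e2_def u_def v_def algebra_simps)
  then have even': "(c + d) * e1 + (d - c) * e2 = 0" and odd': "(a + b) * u + (b - a) * v = 0"
    using \<open>k > 0\<close> by auto
  have pyth: "cosh k * cosh k - sinh k * sinh k = 1" "sin k * sin k + cos k * cos k = 1"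
    using hyperbolic_pythagoras[of k] sin_cos_squared_add[of k] by (simp_all add: power2_eq_square)
  have W: "u * (e1 + e2) - v * (e1 - e2) = sinh k * cosh k - sin k * cos k"
    unfolding u_def v_def e1_def e2_def using pyth by algebra
  have S: "e1 * (u + v) - e2 * (u - v) = sinh k * cosh k + sin k * cos k"
    unfolding u_def v_def e1_def e2_def using pyth by algebra
  have "sinh k * cosh k - sin k * cos k > 0"
    using abs_sin_cos_less_sinh_cosh[OF \<open>k > 0\<close>] by linarith
  moreover have "c * (sinh k * cosh k - sin k * cos k) = (c * u + d * v) * (e1 + e2) - ((c + d) * e1 + (d - c) * e2) * v"
    "d * (sinh k * cosh k - sin k * cos k) = ((c + d) * e1 + (d - c) * e2) * u - (c * u + d * v) * (e1 - e2)"
    unfolding W[symmetric] by algebra+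
  ultimately show "c = 0" "d = 0" unfolding odd even' by simp_all
  have "a * (sinh k * cosh k + sin k * cos k) = (u + v) * (a * e1 + b * e2) - e2 * ((a + b) * u + (b - a) * v)"
    "b * (sinh k * cosh k + sin k * cos k) = e1 * ((a + b) * u + (b - a) * v) - (u - v) * (a * e1 + b * e2)"
    unfolding S[symmetric] by algebra+
  then show "a * (sinh k * cosh k + sin k * cos k) = \<beta> * (sinh k * cos k + cosh k * sin k)"
    "b * (sinh k * cosh k + sin k * cos k) = \<beta> * (cosh k * sin k - sinh k * cos k)"
    unfolding even odd' by (simp_all add: u_def v_def algebra_simps)
qed

lemma boundary_data_eventually_eq:
  fixes f q :: "real \<Rightarrow> real"
  assumes f: "(f has_real_derivative 0) (at x within S)"
    and ev: "eventually (\<lambda>y. f y = q y) (at x within S)"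
    and q: "(q has_real_derivative d) (at x)"
    and nontriv: "at x within S \<noteq> bot"
  shows "f x = q x" "d = 0"
proof -
  have "(q \<longlongrightarrow> f x) (at x within S)"
    using DERIV_continuous[OF f] ev by (auto simp: continuous_within intro: Lim_transform_eventually)
  moreover have "(q \<longlongrightarrow> q x) (at x within S)"
    using DERIV_continuous[OF has_field_derivative_at_within[OF q]] by (simp add: continuous_within)
  ultimately show "f x = q x" using tendsto_unique[OF nontriv] by blast
  then have "(q has_real_derivative 0) (at x within S)"
    using f has_field_derivative_cong_eventually[OF ev] by simp
  then show "d = 0"
    using has_field_derivative_unique[OF has_field_derivative_at_within[OF q] _ nontriv] by blast
qed

lemma clamped_ends_of_eq_on_interior:
  fixes f q q' :: "real \<Rightarrow> real"
  assumes "a < b"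
    and eq: "\<And>y. y \<in> {a<..<b} \<Longrightarrow> f y = q y"
    and q: "\<And>y. (q has_real_derivative q' y) (at y)"
    and "(f has_real_derivative 0) (at a within {a..b})" "(f has_real_derivative 0) (at b within {a..b})"
  shows "f a = q a" "q' a = 0" "f b = q b" "q' b = 0"
proof -
  have "eventually (\<lambda>y. f y = q y) (at_right a)"
    using eventually_at_right_real[OF \<open>a < b\<close>] by (rule eventually_mono) (use eq in auto)
  moreover have "eventually (\<lambda>y. f y = q y) (at_left b)"
    using eventually_at_left_real[OF \<open>a < b\<close>] by (rule eventually_mono) (use eq in auto)
  ultimately show "f a = q a" "q' a = 0" "f b = q b" "q' b = 0"
    using assms(4,5) boundary_data_eventually_eq[OF _ _ q] \<open>a < b\<close>
    by (simp_all add: at_within_Icc_at_left at_within_Icc_at_right)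
qed

lemma is_rc_deriv_eq:
  fixes \<alpha> :: real and f :: "real \<Rightarrow> real"
  assumes "\<alpha> > 0" "is_rc \<alpha> f" "x \<in> {-1<..<1}"
  defines "k \<equiv> 1 / (\<alpha> * sqrt 2)"
  shows "(sinh k * cosh k + sin k * cos k) * deriv f x =
    4 * k * \<alpha>^3 * (cosh k * sin k * (sinh (k*x) * cos (k*x)) - sinh k * cos k * (cosh (k*x) * sin (k*x)))"
proof -
  have "k > 0" using \<open>\<alpha> > 0\<close> by (simp add: k_def)
  obtain a b c d where f_eq: "\<And>y. y \<in> {-1<..<1} \<Longrightarrow> f y = hc_comb k (a, b, c, d) y - 2 * \<alpha>^3"
    and df_eq: "\<And>y. y \<in> {-1<..<1} \<Longrightarrow> deriv f y = hc_comb k (hc_coeff_deriv k (a, b, c, d)) y"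
    using is_rc_eq_hc_comb[OF assms(1,2)] unfolding k_def by (metis prod_cases4)
  have "((\<lambda>y. hc_comb k (a, b, c, d) y - 2 * \<alpha>^3) has_real_derivative
      hc_comb k (hc_coeff_deriv k (a, b, c, d)) y) (at y)" for y
    by (rule DERIV_diff[OF has_real_derivative_hc_comb DERIV_const, simplified])
  from clamped_ends_of_eq_on_interior[of "-1" 1, OF _ f_eq this] assms(2)
  have "hc_comb k (a, b, c, d) 1 = 2 * \<alpha>^3" "hc_comb k (a, b, c, d) (-1) = 2 * \<alpha>^3"
    "hc_comb k (hc_coeff_deriv k (a, b, c, d)) 1 = 0" "hc_comb k (hc_coeff_deriv k (a, b, c, d)) (-1) = 0"
    by (simp_all add: is_rc_def)
  note coeffs = hc_coeffs_of_boundary_values[OF \<open>k > 0\<close> this]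
  have "(sinh k * cosh k + sin k * cos k) * deriv f x =
    k * ((a * (sinh k * cosh k + sin k * cos k) + b * (sinh k * cosh k + sin k * cos k)) * (sinh (k*x) * cos (k*x))
      + (b * (sinh k * cosh k + sin k * cos k) - a * (sinh k * cosh k + sin k * cos k)) * (cosh (k*x) * sin (k*x)))"
    unfolding df_eq[OF assms(3)] coeffs(1,2) by (simp add: algebra_simps)
  then show ?thesis
    unfolding coeffs(3,4) by (simp add: algebra_simps)
qed

theorem theorem4p3:
  fixes \<alpha> :: real and f :: "real \<Rightarrow> real"
  assumes "\<alpha> \<ge> alpha_crit"
    and "is_rc \<alpha> f"
  shows "\<forall>x\<in>{0<..<1}. deriv f x > 0"
proof
  fix x :: real assume x: "x \<in> {0<..<1}"
  have "alpha_crit > 0"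
    using a_c_bounds pi_gt_zero by (simp add: alpha_crit_def)
  then have "\<alpha> > 0" using assms(1) by linarith
  define k where "k = 1 / (\<alpha> * sqrt 2)"
  have "0 < k" using \<open>\<alpha> > 0\<close> by (simp add: k_def)
  have "k \<le> 1 / (alpha_crit * sqrt 2)"
    unfolding k_def using assms(1) \<open>alpha_crit > 0\<close> by (intro divide_left_mono mult_right_mono) auto
  also have "\<dots> = a_c"
    using a_c_bounds pi_gt_zero by (simp add: alpha_crit_def)
  finally have "k \<le> a_c" .
  have "cosh k * sin k * (sinh (k*x) * cos (k*x)) - sinh k * cos k * (cosh (k*x) * sin (k*x)) > 0"
    using sinh_cos_cosh_sin_cross_pos[of "k*x" k] x \<open>0 < k\<close> \<open>k \<le> a_c\<close> by (simp add: algebra_simps)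
  then have "(sinh k * cosh k + sin k * cos k) * deriv f x > 0"
    using is_rc_deriv_eq[OF \<open>\<alpha> > 0\<close> assms(2), of x] x \<open>0 < k\<close> \<open>\<alpha> > 0\<close>
    unfolding k_def[symmetric] by simp
  moreover have "sinh k * cosh k + sin k * cos k > 0"
    using abs_sin_cos_less_sinh_cosh[OF \<open>0 < k\<close>] by linarith
  ultimately show "deriv f x > 0"
    by (rule zero_less_mult_pos)
qed

end
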